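(* A category $S$ is left cancellative (resp., right cancellative) if and only if its universal monoid $\mathrm{U_{mon}}(S)$ is left cancellative (resp., right cancellative). Moreover, $S$ is a groupoid if and only if $\mathrm{U_{mon}}(S)$ is a group.
   Context: Categories are arrow-only: a set $S$ with partial associative multiplication, identities $\mathrm{Id}\,S$, source/target identities. $S$ is left (right) cancellative if $ax=ay\Rightarrow x=y$ (resp. $xa=ya\Rightarrow x=y$) for all $a,x,y$; a groupoid is a category in which every element has a two-sided inverse. $\mathrm{U_{mon}}(S)$ is the monoid presented by generators $\varepsilon_S(x)$ ($x\in S$) and relations $\varepsilon_S(e)=1$ ($e\in\mathrm{Id}\,S$), $\varepsilon_S(x)\varepsilon_S(y)=\varepsilon_S(xy)$ whenever $xy$ is defined. *)

theory Defs
  imports "HOL-Algebra.Group"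
begin

text \<open>Arrow-only category: carrier S, source and target identity maps src, tgt,
  and composition m; the product x y is defined iff tgt x = src y.\<close>

definition cat_defined :: "('a \<Rightarrow> 'a) \<Rightarrow> ('a \<Rightarrow> 'a) \<Rightarrow> 'a \<Rightarrow> 'a \<Rightarrow> bool" where
  "cat_defined src tgt x y \<longleftrightarrow> tgt x = src y"

definition category :: "'a set \<Rightarrow> ('a \<Rightarrow> 'a) \<Rightarrow> ('a \<Rightarrow> 'a) \<Rightarrow> ('a \<Rightarrow> 'a \<Rightarrow> 'a) \<Rightarrow> bool" where
  "category S src tgt m \<longleftrightarrow>
     (\<forall>x\<in>S. src x \<in> S \<and> tgt x \<in> S) \<and>
     (\<forall>x\<in>S. src (src x) = src x \<and> tgt (src x) = src x \<and>
             src (tgt x) = tgt x \<and> tgt (tgt x) = tgt x) \<and>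
     (\<forall>x\<in>S. m (src x) x = x \<and> m x (tgt x) = x) \<and>
     (\<forall>x\<in>S. \<forall>y\<in>S. tgt x = src y \<longrightarrow>
          m x y \<in> S \<and> src (m x y) = src x \<and> tgt (m x y) = tgt y) \<and>
     (\<forall>x\<in>S. \<forall>y\<in>S. \<forall>z\<in>S. tgt x = src y \<longrightarrow> tgt y = src z \<longrightarrow>
          m (m x y) z = m x (m y z))"

definition cat_ids :: "'a set \<Rightarrow> ('a \<Rightarrow> 'a) \<Rightarrow> 'a set" where
  "cat_ids S src = {e \<in> S. src e = e}"

definition cat_left_cancellative ::
  "'a set \<Rightarrow> ('a \<Rightarrow> 'a) \<Rightarrow> ('a \<Rightarrow> 'a) \<Rightarrow> ('a \<Rightarrow> 'a \<Rightarrow> 'a) \<Rightarrow> bool" where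
  "cat_left_cancellative S src tgt m \<longleftrightarrow>
     (\<forall>a\<in>S. \<forall>x\<in>S. \<forall>y\<in>S. cat_defined src tgt a x \<longrightarrow> cat_defined src tgt a y \<longrightarrow>
        m a x = m a y \<longrightarrow> x = y)"

definition cat_right_cancellative ::
  "'a set \<Rightarrow> ('a \<Rightarrow> 'a) \<Rightarrow> ('a \<Rightarrow> 'a) \<Rightarrow> ('a \<Rightarrow> 'a \<Rightarrow> 'a) \<Rightarrow> bool" where
  "cat_right_cancellative S src tgt m \<longleftrightarrow>
     (\<forall>a\<in>S. \<forall>x\<in>S. \<forall>y\<in>S. cat_defined src tgt x a \<longrightarrow> cat_defined src tgt y a \<longrightarrow>
        m x a = m y a \<longrightarrow> x = y)"

definition groupoid ::
  "'a set \<Rightarrow> ('a \<Rightarrow> 'a) \<Rightarrow> ('a \<Rightarrow> 'a) \<Rightarrow> ('a \<Rightarrow> 'a \<Rightarrow> 'a) \<Rightarrow> bool" where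
  "groupoid S src tgt m \<longleftrightarrow> category S src tgt m \<and>
     (\<forall>x\<in>S. \<exists>y\<in>S. cat_defined src tgt x y \<and> cat_defined src tgt y x \<and>
        m x y = src x \<and> m y x = tgt x)"

text \<open>The congruence on the free monoid (words = lists over S) generated by the
  defining relations of U_mon(S): e = 1 for identities e, and x y = (xy) when defined.\<close>

inductive umon_eq ::
  "'a set \<Rightarrow> ('a \<Rightarrow> 'a) \<Rightarrow> ('a \<Rightarrow> 'a) \<Rightarrow> ('a \<Rightarrow> 'a \<Rightarrow> 'a) \<Rightarrow> 'a list \<Rightarrow> 'a list \<Rightarrow> bool"
  for S src tgt m where
  refl: "u \<in> lists S \<Longrightarrow> umon_eq S src tgt m u u"
| sym: "umon_eq S src tgt m u v \<Longrightarrow> umon_eq S src tgt m v u"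
| trans: "umon_eq S src tgt m u v \<Longrightarrow> umon_eq S src tgt m v w \<Longrightarrow> umon_eq S src tgt m u w"
| ident: "p \<in> lists S \<Longrightarrow> q \<in> lists S \<Longrightarrow> e \<in> cat_ids S src \<Longrightarrow>
          umon_eq S src tgt m (p @ [e] @ q) (p @ q)"
| mult: "p \<in> lists S \<Longrightarrow> q \<in> lists S \<Longrightarrow> x \<in> S \<Longrightarrow> y \<in> S \<Longrightarrow> cat_defined src tgt x y \<Longrightarrow>
          umon_eq S src tgt m (p @ [x, y] @ q) (p @ [m x y] @ q)"

definition umon_rel ::
  "'a set \<Rightarrow> ('a \<Rightarrow> 'a) \<Rightarrow> ('a \<Rightarrow> 'a) \<Rightarrow> ('a \<Rightarrow> 'a \<Rightarrow> 'a) \<Rightarrow> ('a list \<times> 'a list) set" where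
  "umon_rel S src tgt m = {(u, v). umon_eq S src tgt m u v}"

text \<open>The universal monoid U_mon(S): the quotient of the free monoid on S by that congruence;
  the element epsilon_S(x) is the class of the one-letter word [x].\<close>
definition Umon ::
  "'a set \<Rightarrow> ('a \<Rightarrow> 'a) \<Rightarrow> ('a \<Rightarrow> 'a) \<Rightarrow> ('a \<Rightarrow> 'a \<Rightarrow> 'a) \<Rightarrow> 'a list set monoid" where
  "Umon S src tgt m =
    \<lparr> carrier = lists S // umon_rel S src tgt m,
      mult = (\<lambda>A B. umon_rel S src tgt m `` {(SOME u. u \<in> A) @ (SOME v. v \<in> B)}),
      one = umon_rel S src tgt m `` {[]} \<rparr>"

definition monoid_left_cancellative :: "('b, 'c) monoid_scheme \<Rightarrow> bool" where
  "monoid_left_cancellative M \<longleftrightarrow>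
     (\<forall>a\<in>carrier M. \<forall>x\<in>carrier M. \<forall>y\<in>carrier M. a \<otimes>\<^bsub>M\<^esub> x = a \<otimes>\<^bsub>M\<^esub> y \<longrightarrow> x = y)"

definition monoid_right_cancellative :: "('b, 'c) monoid_scheme \<Rightarrow> bool" where
  "monoid_right_cancellative M \<longleftrightarrow>
     (\<forall>a\<in>carrier M. \<forall>x\<in>carrier M. \<forall>y\<in>carrier M. x \<otimes>\<^bsub>M\<^esub> a = y \<otimes>\<^bsub>M\<^esub> a \<longrightarrow> x = y)"

end

theory Submission
  imports Defs
begin

text \<open>Every element of U_mon(S) has a unique normal form: a word of non-identity arrows in
  which no two adjacent letters are composable. It is computed by letting each letter act on a
  reduced word, deleting identities and multiplying into the head when composable; this action
  respects the defining relations. Left cancellation in S makes the action of each letter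
  injective, so U_mon(S) is left cancellative, while one-letter words detect cancellation in S.
  Right cancellation follows by passing to the opposite category, whose universal monoid is
  obtained by reversing words. Finally, an inverse of the class of a non-identity x must have the
  normal form of a single arrow y, and then xy and yx are identities.\<close>

lemma category_op: "category S src tgt m \<Longrightarrow> category S tgt src (\<lambda>x y. m y x)"
  unfolding category_def by auto

lemma cat_right_cancellative_iff_op:
  "cat_right_cancellative S src tgt m \<longleftrightarrow> cat_left_cancellative S tgt src (\<lambda>x y. m y x)"
  unfolding cat_right_cancellative_def cat_left_cancellative_def cat_defined_def by metis

locale arrow_category =
  fixes S :: "'a set" and src tgt :: "'a \<Rightarrow> 'a" and m :: "'a \<Rightarrow> 'a \<Rightarrow> 'a"
  assumes category: "category S src tgt m"
begin

lemma src_in [simp]: "x \<in> S \<Longrightarrow> src x \<in> S"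
  and tgt_in [simp]: "x \<in> S \<Longrightarrow> tgt x \<in> S"
  and src_src [simp]: "x \<in> S \<Longrightarrow> src (src x) = src x"
  and tgt_src [simp]: "x \<in> S \<Longrightarrow> tgt (src x) = src x"
  and src_tgt [simp]: "x \<in> S \<Longrightarrow> src (tgt x) = tgt x"
  and tgt_tgt [simp]: "x \<in> S \<Longrightarrow> tgt (tgt x) = tgt x"
  and comp_src [simp]: "x \<in> S \<Longrightarrow> m (src x) x = x"
  and comp_tgt [simp]: "x \<in> S \<Longrightarrow> m x (tgt x) = x"
  using category unfolding category_def by auto

lemma comp_in [simp]: "\<lbrakk>x \<in> S; y \<in> S; tgt x = src y\<rbrakk> \<Longrightarrow> m x y \<in> S"
  and src_comp [simp]: "\<lbrakk>x \<in> S; y \<in> S; tgt x = src y\<rbrakk> \<Longrightarrow> src (m x y) = src x"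
  and tgt_comp [simp]: "\<lbrakk>x \<in> S; y \<in> S; tgt x = src y\<rbrakk> \<Longrightarrow> tgt (m x y) = tgt y"
  using category unfolding category_def by auto

lemma comp_assoc:
  "\<lbrakk>x \<in> S; y \<in> S; z \<in> S; tgt x = src y; tgt y = src z\<rbrakk> \<Longrightarrow> m (m x y) z = m x (m y z)"
  using category unfolding category_def by blast

lemma tgt_ident: "\<lbrakk>e \<in> S; src e = e\<rbrakk> \<Longrightarrow> tgt e = e"
  by (metis tgt_src)

lemma comp_ident_right: "\<lbrakk>x \<in> S; e \<in> S; src e = e; tgt x = src e\<rbrakk> \<Longrightarrow> m x e = x"
  by (metis comp_tgt)

lemma comp_ident_left: "\<lbrakk>e \<in> S; y \<in> S; src e = e; tgt e = src y\<rbrakk> \<Longrightarrow> m e y = y"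
  by (metis comp_src tgt_ident)

abbreviation word_eq :: "'a list \<Rightarrow> 'a list \<Rightarrow> bool" where
  "word_eq \<equiv> umon_eq S src tgt m"

lemma word_eq_lists: "word_eq u v \<Longrightarrow> u \<in> lists S \<and> v \<in> lists S"
  by (induction rule: umon_eq.induct) (auto simp: cat_ids_def cat_defined_def)

lemma word_eq_append:
  assumes "word_eq u v" "p \<in> lists S" "q \<in> lists S"
  shows "word_eq (p @ u @ q) (p @ v @ q)"
  using assms
proof (induction rule: umon_eq.induct)
  case (refl u)
  then show ?case by (intro umon_eq.refl) auto
next
  case (ident p' q' e)
  then have "word_eq ((p @ p') @ [e] @ (q' @ q)) ((p @ p') @ (q' @ q))"
    by (intro umon_eq.ident) auto
  then show ?case by simp
next
  case (mult p' q' x y)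
  then have "word_eq ((p @ p') @ [x, y] @ (q' @ q)) ((p @ p') @ [m x y] @ (q' @ q))"
    by (intro umon_eq.mult) auto
  then show ?case by simp
qed (auto intro: umon_eq.intros)

lemma word_eq_Cons: "word_eq u v \<Longrightarrow> x \<in> S \<Longrightarrow> word_eq (x # u) (x # v)"
  using word_eq_append[of u v "[x]" "[]"] by simp

lemma word_eq_ident_Cons: "\<lbrakk>e \<in> S; src e = e; v \<in> lists S\<rbrakk> \<Longrightarrow> word_eq (e # v) v"
  using umon_eq.ident[of "[]" S v e] by (simp add: cat_ids_def)

lemma word_eq_comp_Cons:
  "\<lbrakk>x \<in> S; y \<in> S; tgt x = src y; v \<in> lists S\<rbrakk> \<Longrightarrow> word_eq (x # y # v) (m x y # v)"
  using umon_eq.mult[of "[]" S v x y] by (simp add: cat_defined_def)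

definition reduced :: "'a list \<Rightarrow> bool" where
  "reduced v \<longleftrightarrow> (\<forall>x\<in>set v. x \<in> S \<and> src x \<noteq> x) \<and> successively (\<lambda>x y. tgt x \<noteq> src y) v"

lemma reduced_simps [simp]:
  "reduced []"
  "reduced (x # v) \<longleftrightarrow> x \<in> S \<and> src x \<noteq> x \<and> (v = [] \<or> tgt x \<noteq> src (hd v)) \<and> reduced v"
  by (auto simp: reduced_def successively_Cons)

lemma reduced_lists: "reduced v \<Longrightarrow> v \<in> lists S"
  by (induction v) auto

fun push :: "'a \<Rightarrow> 'a list \<Rightarrow> 'a list" where
  "push x [] = (if src x = x then [] else [x])"
| "push x (z # v) =
     (if src x = x then z # v
      else if tgt x = src z then (if src (m x z) = m x z then v else m x z # v)
      else x # z # v)"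

lemma push_ident: "src x = x \<Longrightarrow> push x v = v"
  by (cases v) auto

lemma push_noncomposable:
  "\<lbrakk>src x \<noteq> x; v = [] \<or> tgt x \<noteq> src (hd v)\<rbrakk> \<Longrightarrow> push x v = x # v"
  by (cases v) auto

text \<open>Since the composite m x z has the target of z, it is not composable with the rest of
  the reduced word z # v.\<close>

lemma push_composable:
  assumes "x \<in> S" "tgt x = src z" "reduced (z # v)"
  shows "push x (z # v) = push (m x z) v"
proof (cases "src x = x")
  case True
  then have "m x z = z" using assms by (simp add: comp_ident_left)
  then show ?thesis using True assms by (simp add: push_noncomposable)
next
  case False
  then show ?thesis using assms by (cases v) auto
qed

lemma reduced_push: "x \<in> S \<Longrightarrow> reduced v \<Longrightarrow> reduced (push x v)"
  by (cases v) auto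

lemma push_comp:
  assumes "x \<in> S" "y \<in> S" "tgt x = src y" "reduced v"
  shows "push x (push y v) = push (m x y) v"
  using assms
proof (induction v arbitrary: y)
  case Nil
  then show ?case
    by (cases "src y = y"; cases "src x = x") (auto simp: push_ident comp_ident_right comp_ident_left)
next
  case (Cons z v)
  show ?case
  proof (cases "src y = y")
    case True
    then show ?thesis using Cons.prems by (simp add: push_ident comp_ident_right)
  next
    case y: False
    show ?thesis
    proof (cases "tgt y = src z")
      case True
      have yz: "m y z \<in> S" "tgt x = src (m y z)" and v: "reduced v"
        using Cons.prems True by auto
      have "push x (push y (z # v)) = push x (push (m y z) v)"
        using Cons.prems True by (simp only: push_composable)
      also have "\<dots> = push (m x (m y z)) v"
        using Cons.IH[OF \<open>x \<in> S\<close> yz v] .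
      also have "\<dots> = push (m (m x y) z) v"
        using Cons.prems True by (simp add: comp_assoc)
      also have "\<dots> = push (m x y) (z # v)"
        using Cons.prems True by (intro push_composable[symmetric]) auto
      finally show ?thesis .
    next
      case False
      then have "push y (z # v) = y # z # v" using y by simp
      moreover have "reduced (y # z # v)" using Cons.prems False y by simp
      ultimately show ?thesis using Cons.prems by (simp only: push_composable)
    qed
  qed
qed

lemma word_eq_push:
  assumes x: "x \<in> S" and v: "v \<in> lists S"
  shows "word_eq (x # v) (push x v)"
proof (cases "src x = x")
  case True
  then show ?thesis using assms by (simp add: push_ident word_eq_ident_Cons)
next
  case x_nonident: False
  show ?thesis
  proof (cases v)
    case Nil
    then show ?thesis using x x_nonident by (auto intro: umon_eq.refl)
  next
    case (Cons z v')
    show ?thesis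
    proof (cases "tgt x = src z")
      case True
      then have "word_eq (x # v) (m x z # v')"
        using x v Cons by (simp add: word_eq_comp_Cons)
      moreover have "word_eq (m x z # v') v'" if "src (m x z) = m x z"
        using that True x v Cons by (intro word_eq_ident_Cons) auto
      ultimately show ?thesis
        using True x_nonident Cons by (auto intro: umon_eq.trans)
    next
      case False
      then show ?thesis using x v x_nonident Cons by (simp add: umon_eq.refl)
    qed
  qed
qed

definition reduce :: "'a list \<Rightarrow> 'a list" where
  "reduce w = foldr push w []"

lemma reduce_append: "reduce (p @ q) = foldr push p (reduce q)"
  by (simp add: reduce_def)

lemma reduce_Cons: "reduce (x # w) = push x (reduce w)"
  by (simp add: reduce_def)

lemma reduced_foldr_push: "p \<in> lists S \<Longrightarrow> reduced v \<Longrightarrow> reduced (foldr push p v)"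
  by (induction p) (auto intro: reduced_push)

lemma reduced_reduce: "w \<in> lists S \<Longrightarrow> reduced (reduce w)"
  unfolding reduce_def by (simp add: reduced_foldr_push)

lemma reduce_reduced: "reduced v \<Longrightarrow> reduce v = v"
  by (induction v) (auto simp: reduce_def push_noncomposable)

lemma reduce_eq_if_word_eq: "word_eq u v \<Longrightarrow> reduce u = reduce v"
proof (induction rule: umon_eq.induct)
  case (ident p q e)
  then show ?case by (simp add: reduce_append reduce_Cons cat_ids_def push_ident)
next
  case (mult p q x y)
  then show ?case
    by (simp add: reduce_append reduce_Cons cat_defined_def push_comp reduced_reduce)
qed auto

lemma word_eq_reduce: "w \<in> lists S \<Longrightarrow> word_eq w (reduce w)"
proof (induction w)
  case Nil
  then show ?case by (simp add: reduce_def umon_eq.refl)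
next
  case (Cons x w)
  then have "word_eq (x # w) (x # reduce w)" by (simp add: word_eq_Cons)
  moreover have "word_eq (x # reduce w) (push x (reduce w))"
    using Cons.prems reduced_reduce reduced_lists by (simp add: word_eq_push)
  ultimately show ?case by (auto simp: reduce_Cons intro: umon_eq.trans)
qed

theorem word_eq_iff_reduce_eq:
  "u \<in> lists S \<Longrightarrow> v \<in> lists S \<Longrightarrow> word_eq u v \<longleftrightarrow> reduce u = reduce v"
  by (metis word_eq_reduce reduce_eq_if_word_eq umon_eq.sym umon_eq.trans)

lemma push_cases [consumes 3, case_names keep absorb compose]:
  assumes "x \<in> S" "src x \<noteq> x" "reduced v"
  obtains (keep) "push x v = x # v"
    | (absorb) z v' where "v = z # v'" "tgt x = src z" "m x z = src x" "push x v = v'"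
    | (compose) z v' where "v = z # v'" "tgt x = src z" "src (m x z) \<noteq> m x z"
        "push x v = m x z # v'"
proof (cases v)
  case (Cons z v')
  then have "z \<in> S" using assms(3) by simp
  then show ?thesis using Cons that assms
    by (cases "tgt x = src z"; cases "src (m x z) = m x z") auto
qed (use that assms in auto)

text \<open>The three cases of push_cases are told apart by the result: absorption leaves a word
  whose head does not start at src x, and under left cancellation m x z \<noteq> x for
  non-identities z.\<close>

lemma push_inj:
  assumes lc: "cat_left_cancellative S src tgt m" and x: "x \<in> S"
    and v: "reduced v" and w: "reduced w" and eq: "push x v = push x w"
  shows "v = w"
proof (cases "src x = x")
  case True
  then show ?thesis using eq by (simp add: push_ident)
next
  case x_nonident: False
  have cancel: "z = z'"
    if "z \<in> S" "z' \<in> S" "tgt x = src z" "tgt x = src z'" "m x z = m x z'" for z z'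
    using lc x that unfolding cat_left_cancellative_def cat_defined_def by blast
  have comp_ne: "m x z \<noteq> x" if "z \<in> S" "src z \<noteq> z" "tgt x = src z" for z
    using cancel[of z "tgt x"] that x by (metis comp_tgt src_tgt tgt_in)
  have absorbed: "r = [] \<or> src (hd r) \<noteq> src x"
    if "reduced (z # r)" "tgt x = src z" "m x z = src x" for z r
    using that x tgt_comp[of x z] by auto
  from x x_nonident v show ?thesis
  proof (cases rule: push_cases)
    case v_keep: keep
    from x x_nonident w show ?thesis
    proof (cases rule: push_cases)
      case keep
      then show ?thesis using v_keep eq by simp
    next
      case (absorb z w')
      then show ?thesis using v_keep eq absorbed[of z w'] w by auto
    next
      case (compose z w')
      then show ?thesis using v_keep eq comp_ne[of z] w by auto
    qed
  next
    case v_absorb: (absorb z v')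
    from x x_nonident w show ?thesis
    proof (cases rule: push_cases)
      case keep
      then show ?thesis using v_absorb eq absorbed[of z v'] v by auto
    next
      case (absorb z' w')
      have "z = z'"
        using cancel[of z z'] absorb v_absorb v w by simp
      then show ?thesis using absorb v_absorb eq by simp
    next
      case (compose z' w')
      then show ?thesis using v_absorb eq absorbed[of z v'] v w x by auto
    qed
  next
    case v_compose: (compose z v')
    from x x_nonident w show ?thesis
    proof (cases rule: push_cases)
      case keep
      then show ?thesis using v_compose eq comp_ne[of z] v by auto
    next
      case (absorb z' w')
      then show ?thesis using v_compose eq absorbed[of z' w'] v w x by auto
    next
      case (compose z' w')
      have "z = z'"
        using cancel[of z z'] compose v_compose v w eq by simp
      then show ?thesis using compose v_compose eq by simp
    qed
  qed
qed

lemma word_eq_singleton: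
  assumes "x \<in> S" "y \<in> S" "src x = src y" "word_eq [x] [y]"
  shows "x = y"
proof -
  have "push x [] = push y []"
    using reduce_eq_if_word_eq[OF assms(4)] by (simp add: reduce_def)
  then show ?thesis using assms(3) by (auto split: if_splits)
qed

lemma foldr_push_inj:
  assumes lc: "cat_left_cancellative S src tgt m"
  shows "\<lbrakk>p \<in> lists S; reduced v; reduced w; foldr push p v = foldr push p w\<rbrakk> \<Longrightarrow> v = w"
proof (induction p)
  case (Cons x p)
  have p: "p \<in> lists S" and x: "x \<in> S" using Cons.prems(1) by simp_all
  have "push x (foldr push p v) = push x (foldr push p w)"
    using Cons.prems(4) by simp
  then have "foldr push p v = foldr push p w"
    using push_inj[OF lc x] reduced_foldr_push[OF p] Cons.prems(2,3) by blast
  then show ?case using Cons.IH p Cons.prems(2,3) by blast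
qed simp

lemma word_eq_left_cancel:
  assumes lc: "cat_left_cancellative S src tgt m"
    and "a \<in> lists S" "u \<in> lists S" "v \<in> lists S" "word_eq (a @ u) (a @ v)"
  shows "word_eq u v"
proof -
  have "foldr push a (reduce u) = foldr push a (reduce v)"
    using reduce_eq_if_word_eq[OF assms(5)] by (simp add: reduce_append)
  then have "reduce u = reduce v"
    using foldr_push_inj[OF lc] assms(2-4) reduced_reduce by blast
  then show ?thesis using assms by (simp add: word_eq_iff_reduce_eq)
qed

abbreviation U :: "'a list set monoid" where
  "U \<equiv> Umon S src tgt m"

abbreviation word_class :: "'a list \<Rightarrow> 'a list set" where
  "word_class u \<equiv> umon_rel S src tgt m `` {u}"

lemma word_class_eq_iff:
  "u \<in> lists S \<Longrightarrow> v \<in> lists S \<Longrightarrow> word_class u = word_class v \<longleftrightarrow> word_eq u v"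
  unfolding umon_rel_def by (auto intro: umon_eq.refl umon_eq.sym umon_eq.trans)

lemma carrier_Umon: "carrier U = word_class ` lists S"
  by (auto simp: Umon_def quotient_def)

lemma one_Umon: "\<one>\<^bsub>U\<^esub> = word_class []"
  by (simp add: Umon_def)

lemma mult_Umon:
  assumes u: "u \<in> lists S" and v: "v \<in> lists S"
  shows "word_class u \<otimes>\<^bsub>U\<^esub> word_class v = word_class (u @ v)"
proof -
  define u' where "u' = (SOME u'. u' \<in> word_class u)"
  define v' where "v' = (SOME v'. v' \<in> word_class v)"
  have "u' \<in> word_class u" "v' \<in> word_class v"
    unfolding u'_def v'_def using u v by (auto intro!: someI umon_eq.refl simp: umon_rel_def)
  then have "word_eq u u'" "word_eq v v'" by (auto simp: umon_rel_def)
  then have "word_eq (u @ v) (u' @ v')"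
    using word_eq_append[of u u' "[]" v] word_eq_append[of v v' u' "[]"] word_eq_lists u v
    by (auto intro: umon_eq.trans)
  then have "word_class (u @ v) = word_class (u' @ v')"
    using word_eq_lists word_class_eq_iff by blast
  then show ?thesis by (simp add: Umon_def u'_def v'_def)
qed

lemma monoid_Umon: "monoid U"
proof (rule monoidI)
  fix X Y Z assume "X \<in> carrier U" "Y \<in> carrier U" "Z \<in> carrier U"
  then obtain u v w where "u \<in> lists S" "v \<in> lists S" "w \<in> lists S"
    and "X = word_class u" "Y = word_class v" "Z = word_class w"
    by (auto simp: carrier_Umon)
  then show "X \<otimes>\<^bsub>U\<^esub> Y \<otimes>\<^bsub>U\<^esub> Z = X \<otimes>\<^bsub>U\<^esub> (Y \<otimes>\<^bsub>U\<^esub> Z)"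
    by (simp add: mult_Umon)
qed (auto simp: carrier_Umon one_Umon mult_Umon in_lists_conv_set intro!: imageI)

lemma monoid_left_cancellative_Umon_iff:
  "monoid_left_cancellative U \<longleftrightarrow>
     (\<forall>a\<in>lists S. \<forall>u\<in>lists S. \<forall>v\<in>lists S. word_eq (a @ u) (a @ v) \<longrightarrow> word_eq u v)"
  unfolding monoid_left_cancellative_def carrier_Umon
  by (simp add: mult_Umon word_class_eq_iff)

lemma monoid_right_cancellative_Umon_iff:
  "monoid_right_cancellative U \<longleftrightarrow>
     (\<forall>a\<in>lists S. \<forall>u\<in>lists S. \<forall>v\<in>lists S. word_eq (u @ a) (v @ a) \<longrightarrow> word_eq u v)"
  unfolding monoid_right_cancellative_def carrier_Umon
  by (simp add: mult_Umon word_class_eq_iff)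

theorem cat_left_cancellative_iff_Umon:
  "cat_left_cancellative S src tgt m \<longleftrightarrow> monoid_left_cancellative U"
proof
  assume "cat_left_cancellative S src tgt m"
  then show "monoid_left_cancellative U"
    by (auto simp: monoid_left_cancellative_Umon_iff intro: word_eq_left_cancel)
next
  assume "monoid_left_cancellative U"
  then have cancel: "word_eq ([a] @ [x]) ([a] @ [y]) \<Longrightarrow> word_eq [x] [y]"
    if "a \<in> S" "x \<in> S" "y \<in> S" for a x y
    using that unfolding monoid_left_cancellative_Umon_iff by (meson Cons_in_lists_iff lists.Nil)
  show "cat_left_cancellative S src tgt m"
    unfolding cat_left_cancellative_def
  proof (intro ballI impI)
    fix a x y assume a: "a \<in> S" and x: "x \<in> S" and y: "y \<in> S"
      and ax: "cat_defined src tgt a x" and ay: "cat_defined src tgt a y" and eq: "m a x = m a y"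
    have "word_eq [a, x] [m a x]" "word_eq [a, y] [m a y]"
      using a x y ax ay word_eq_comp_Cons[of a _ "[]"] by (simp_all add: cat_defined_def)
    then have "word_eq [a, x] [a, y]"
      using eq by (metis umon_eq.sym umon_eq.trans)
    then have "word_eq [x] [y]"
      using cancel a x y by simp
    moreover have "src x = src y"
      using ax ay by (simp add: cat_defined_def)
    ultimately show "x = y"
      using x y word_eq_singleton by blast
  qed
qed

lemma word_eq_inverse_pair:
  assumes "x \<in> S" "y \<in> S" "tgt x = src y" "m x y = src x"
  shows "word_eq [x, y] []"
  using word_eq_comp_Cons[of x y "[]"] word_eq_ident_Cons[of "src x" "[]"] assms
  by (auto intro: umon_eq.trans)

lemma Units_word_class_singleton:
  assumes "x \<in> S" "y \<in> S" "cat_defined src tgt x y" "cat_defined src tgt y x"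
    "m x y = src x" "m y x = tgt x"
  shows "word_class [x] \<in> Units U"
proof -
  have "word_eq [x, y] []" "word_eq [y, x] []"
    using assms by (auto simp: cat_defined_def intro: word_eq_inverse_pair)
  then have "word_class [x] \<otimes>\<^bsub>U\<^esub> word_class [y] = \<one>\<^bsub>U\<^esub>"
    "word_class [y] \<otimes>\<^bsub>U\<^esub> word_class [x] = \<one>\<^bsub>U\<^esub>"
    using assms by (auto simp: mult_Umon one_Umon word_class_eq_iff)
  then show ?thesis
    using assms unfolding Units_def carrier_Umon by (auto intro!: imageI)
qed

lemma group_Umon_if_groupoid:
  assumes "groupoid S src tgt m"
  shows "group U"
proof -
  interpret monoid U by (rule monoid_Umon)
  have "word_class u \<in> Units U" if "u \<in> lists S" for u
    using that
  proof (induction u)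
    case Nil
    then show ?case by (simp flip: one_Umon)
  next
    case (Cons x u)
    then obtain y where "y \<in> S" "cat_defined src tgt x y" "cat_defined src tgt y x"
      "m x y = src x" "m y x = tgt x"
      using assms unfolding groupoid_def by auto
    then have "word_class [x] \<otimes>\<^bsub>U\<^esub> word_class u \<in> Units U"
      using Cons by (auto intro: Units_word_class_singleton)
    then show ?case using Cons by (simp add: mult_Umon)
  qed
  then show ?thesis
    by (intro group.intro monoid_Umon) (auto simp: group_axioms_def carrier_Umon)
qed

lemma push_eq_Nil:
  assumes "x \<in> S" "src x \<noteq> x" "reduced v" "push x v = []"
  obtains z where "v = [z]" "tgt x = src z" "m x z = src x"
  using assms by (cases rule: push_cases) auto

lemma word_eq_Cons_Nil:
  assumes x: "x \<in> S" "src x \<noteq> x" and w: "w \<in> lists S" and eq: "word_eq (x # w) []"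
  obtains z where "z \<in> S" "word_eq w [z]" "tgt x = src z" "m x z = src x"
proof -
  have "push x (reduce w) = []"
    using reduce_eq_if_word_eq[OF eq] by (simp add: reduce_Cons reduce_def)
  then obtain z where z: "reduce w = [z]" and xz: "tgt x = src z" "m x z = src x"
    using push_eq_Nil x reduced_reduce[OF w] by blast
  have "z \<in> S" "src z \<noteq> z" using reduced_reduce[OF w] z by auto
  then have "word_eq w [z]"
    using w z by (simp add: word_eq_iff_reduce_eq reduce_reduced)
  then show ?thesis using that \<open>z \<in> S\<close> xz by blast
qed

lemma comp_ident_if_word_eq_Nil:
  assumes "x \<in> S" "y \<in> S" "tgt x = src y" "word_eq [x, y] []"
  shows "m x y = src x"
proof -
  have "word_eq [x, y] [m x y]"
    using assms word_eq_comp_Cons[of x y "[]"] by simp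
  then have "word_eq [m x y] []"
    using assms(4) by (blast intro: umon_eq.sym umon_eq.trans)
  then have "push (m x y) [] = []"
    using reduce_eq_if_word_eq[of "[m x y]" "[]"] by (simp add: reduce_def)
  then have "src (m x y) = m x y" by (simp split: if_splits)
  then show ?thesis using assms by simp
qed

lemma groupoid_if_group_Umon:
  assumes "group U"
  shows "groupoid S src tgt m"
  unfolding groupoid_def
proof (intro conjI ballI)
  interpret group U by (rule assms)
  show "category S src tgt m" by (rule category)
  fix x assume x: "x \<in> S"
  show "\<exists>y\<in>S. cat_defined src tgt x y \<and> cat_defined src tgt y x \<and> m x y = src x \<and> m y x = tgt x"
  proof (cases "src x = x")
    case True
    then show ?thesis
      using x by (intro bexI[of _ x]) (auto simp: cat_defined_def tgt_ident comp_ident_left)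
  next
    case x_nonident: False
    have x_carrier: "word_class [x] \<in> carrier U" using x by (simp add: carrier_Umon)
    then have "inv\<^bsub>U\<^esub> word_class [x] \<in> word_class ` lists S"
      by (metis inv_closed carrier_Umon)
    then obtain w where "inv\<^bsub>U\<^esub> word_class [x] = word_class w" and w: "w \<in> lists S"
      by (rule imageE)
    then have right_inv: "word_class [x] \<otimes>\<^bsub>U\<^esub> word_class w = \<one>\<^bsub>U\<^esub>"
      and left_inv: "word_class w \<otimes>\<^bsub>U\<^esub> word_class [x] = \<one>\<^bsub>U\<^esub>"
      using r_inv[OF x_carrier] l_inv[OF x_carrier] by simp_all
    have "word_eq (x # w) []"
      using right_inv x w by (simp add: mult_Umon one_Umon word_class_eq_iff)
    then obtain z where "z \<in> S" "word_eq w [z]" and xz: "tgt x = src z" "m x z = src x"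
      using word_eq_Cons_Nil x x_nonident w by blast
    then have "word_class w = word_class [z]"
      using w by (simp add: word_class_eq_iff)
    then have "word_class [z] \<otimes>\<^bsub>U\<^esub> word_class [x] = \<one>\<^bsub>U\<^esub>"
      using left_inv by simp
    then have "word_eq [z, x] []"
      using x \<open>z \<in> S\<close> by (simp add: mult_Umon one_Umon word_class_eq_iff)
    moreover have "tgt z = src x"
      using xz x \<open>z \<in> S\<close> by (metis tgt_comp tgt_src)
    ultimately have "m z x = tgt x"
      using x xz \<open>z \<in> S\<close> comp_ident_if_word_eq_Nil by simp
    then show ?thesis
      using \<open>z \<in> S\<close> xz \<open>tgt z = src x\<close> by (auto simp: cat_defined_def)
  qed
qed

theorem groupoid_iff_group_Umon: "groupoid S src tgt m \<longleftrightarrow> group U"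
  using group_Umon_if_groupoid groupoid_if_group_Umon by blast

lemma arrow_category_op: "arrow_category S tgt src (\<lambda>x y. m y x)"
  by unfold_locales (rule category_op[OF category])

lemma word_eq_rev: "word_eq u v \<Longrightarrow> umon_eq S tgt src (\<lambda>x y. m y x) (rev u) (rev v)"
proof (induction rule: umon_eq.induct)
  case (refl u)
  then show ?case by (intro umon_eq.refl) auto
next
  case (ident p q e)
  then have "umon_eq S tgt src (\<lambda>x y. m y x) (rev q @ [e] @ rev p) (rev q @ rev p)"
    by (intro umon_eq.ident) (auto simp: cat_ids_def tgt_ident)
  then show ?case by simp
next
  case (mult p q x y)
  then have "umon_eq S tgt src (\<lambda>x y. m y x) (rev q @ [y, x] @ rev p) (rev q @ [m x y] @ rev p)"
    by (intro umon_eq.mult) (auto simp: cat_defined_def)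
  then show ?case by simp
qed (auto intro: umon_eq.sym umon_eq.trans)

lemma word_eq_rev_iff: "umon_eq S tgt src (\<lambda>x y. m y x) (rev u) (rev v) \<longleftrightarrow> word_eq u v"
proof
  interpret op: arrow_category S tgt src "\<lambda>x y. m y x" by (rule arrow_category_op)
  assume "umon_eq S tgt src (\<lambda>x y. m y x) (rev u) (rev v)"
  then show "word_eq u v" using op.word_eq_rev by fastforce
qed (rule word_eq_rev)

lemma monoid_right_cancellative_Umon_iff_op:
  "monoid_right_cancellative U \<longleftrightarrow> monoid_left_cancellative (Umon S tgt src (\<lambda>x y. m y x))"
proof -
  interpret op: arrow_category S tgt src "\<lambda>x y. m y x" by (rule arrow_category_op)
  have rev_eq: "umon_eq S tgt src (\<lambda>x y. m y x) u v \<longleftrightarrow> word_eq (rev u) (rev v)" for u v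
    using word_eq_rev_iff[of "rev u" "rev v"] by simp
  show ?thesis
    unfolding monoid_right_cancellative_Umon_iff op.monoid_left_cancellative_Umon_iff
      rev_eq
  proof (intro iffI ballI impI)
    fix a u v
    assume right_cancel:
        "\<forall>a\<in>lists S. \<forall>u\<in>lists S. \<forall>v\<in>lists S. word_eq (u @ a) (v @ a) \<longrightarrow> word_eq u v"
      and "a \<in> lists S" "u \<in> lists S" "v \<in> lists S" "word_eq (rev (a @ u)) (rev (a @ v))"
    then show "word_eq (rev u) (rev v)"
      using right_cancel[rule_format, of "rev a" "rev u" "rev v"] by (simp add: in_lists_conv_set)
  next
    fix a u v
    assume right_cancel: "\<forall>a\<in>lists S. \<forall>u\<in>lists S. \<forall>v\<in>lists S.
        word_eq (rev (a @ u)) (rev (a @ v)) \<longrightarrow> word_eq (rev u) (rev v)"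
      and "a \<in> lists S" "u \<in> lists S" "v \<in> lists S" "word_eq (u @ a) (v @ a)"
    then show "word_eq u v"
      using right_cancel[rule_format, of "rev a" "rev u" "rev v"] by (simp add: in_lists_conv_set)
  qed
qed

theorem cat_right_cancellative_iff_Umon:
  "cat_right_cancellative S src tgt m \<longleftrightarrow> monoid_right_cancellative U"
proof -
  interpret op: arrow_category S tgt src "\<lambda>x y. m y x" by (rule arrow_category_op)
  show ?thesis
    by (simp only: cat_right_cancellative_iff_op op.cat_left_cancellative_iff_Umon
        monoid_right_cancellative_Umon_iff_op)
qed

end

theorem corollary4p3:
  assumes "category S src tgt m"
  shows "(cat_left_cancellative S src tgt m \<longleftrightarrow> monoid_left_cancellative (Umon S src tgt m))
       \<and> (cat_right_cancellative S src tgt m \<longleftrightarrow> monoid_right_cancellative (Umon S src tgt m))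
       \<and> (groupoid S src tgt m \<longleftrightarrow> group (Umon S src tgt m))"
proof -
  interpret arrow_category S src tgt m by (rule arrow_category.intro) (rule assms)
  show ?thesis
    using cat_left_cancellative_iff_Umon cat_right_cancellative_iff_Umon groupoid_iff_group_Umon
    by blast
qed

end
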